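(* Let $G=(V,E)$ be an infinite vertex-transitive simple graph of bounded degree, with cyclic connective constant $\mu_G$. Let $\alpha_0$ be the unique solution of the equation $$\alpha + \tfrac12 \log\big(1 + e^{-2\alpha}\big) = \log \mu_G .$$ Then for all $\alpha > \alpha_0$ there exist constants $C_0(\alpha), c_0(\alpha) > 0$ such that for every finite $U \subset V$, every $z \in U$ and every $\ell \in \mathbb N$, $$\mathbb{P}_{U}\big( \| \gamma_z \| > \ell \big) \leq C_0(\alpha) \exp\big( - c_0(\alpha)\, \ell \big).$$ Moreover, $C_0(\alpha)$ and $c_0(\alpha)$ can be chosen so that $\lim_{\alpha \to \infty} c_0(\alpha)/\alpha = 1$ and $\limsup_{\alpha \to \infty} C_0(\alpha) < \infty$.
   Context: For a finite simple graph with vertex set $U$ (here the subgraph of $G$ induced by $U$), a permutation on $U$ is a bijection $\pi:U\to U$ such that for every $x\in U$ either $\pi(x)=x$ or $\{x,\pi(x)\}$ is an edge. Let $\mathcal S_U$ be the set of such permutations, $\mathcal H_U(\pi)=\sum_{x\in U}\mathbb 1\{\pi(x)\neq x\}$, and for $\alpha\in\mathbb R$ let $\mathbb P_U(\pi)=e^{-\alpha\mathcal H_U(\pi)}/Z(U)$, where $Z(U)=\sum_{\pi\in\mathcal S_U}e^{-\alpha\mathcal H_U(\pi)}$. For $z\in U$, $\gamma_z(\pi)$ is the cycle of $\pi$ containing $z$, i.e. the directed graph with vertices $\{\pi^i(z):i\in\mathbb N\}$ and edges $(\pi^i(z),\pi^{i+1}(z))$; $\|\gamma_z\|$ is its number of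 edges (it is $0$ if $\pi(z)=z$). A cycle in $G$ is a finite directed subgraph with vertex set enumerated as $x^1,\dots,x^n$ and edge set $\{(x^i,x^{i+1}):1\le i\le n-1\}\cup\{(x^n,x^1)\}$. Fixing a vertex $0$ (origin), $SAP_n$ denotes the set of cycles in $G$ starting from $0$ with $n$ edges ($SAP_0=\{0\}$), and the cyclic connective constant is $\mu_G=\limsup_{n\to\infty}|SAP_n|^{1/n}$. *)

theory Defs
  imports "HOL-Analysis.Analysis" "HOL-Combinatorics.Permutations"
begin

text \<open>Simple graphs on vertex type 'v (vertex set = UNIV) given by an edge relation E.\<close>

definition simple_graph :: "('v \<Rightarrow> 'v \<Rightarrow> bool) \<Rightarrow> bool" where
  "simple_graph E \<longleftrightarrow> (\<forall>x y. E x y \<longrightarrow> E y x) \<and> (\<forall>x. \<not> E x x)"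

definition bounded_degree :: "('v \<Rightarrow> 'v \<Rightarrow> bool) \<Rightarrow> bool" where
  "bounded_degree E \<longleftrightarrow> (\<exists>D::nat. \<forall>x. finite {y. E x y} \<and> card {y. E x y} \<le> D)"

definition graph_automorphism :: "('v \<Rightarrow> 'v \<Rightarrow> bool) \<Rightarrow> ('v \<Rightarrow> 'v) \<Rightarrow> bool" where
  "graph_automorphism E \<phi> \<longleftrightarrow> bij \<phi> \<and> (\<forall>x y. E x y \<longleftrightarrow> E (\<phi> x) (\<phi> y))"

definition vertex_transitive :: "('v \<Rightarrow> 'v \<Rightarrow> bool) \<Rightarrow> bool" where
  "vertex_transitive E \<longleftrightarrow> (\<forall>x y. \<exists>\<phi>. graph_automorphism E \<phi> \<and> \<phi> x = y)"

text \<open>Cycles in G starting at origin o with n edges, encoded by their vertex enumeration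
  x^1 = o, ..., x^n (distinct), edges (x^i,x^(i+1)) and (x^n,x^1). SAP_0 = {o}.\<close>

definition SAP :: "('v \<Rightarrow> 'v \<Rightarrow> bool) \<Rightarrow> 'v \<Rightarrow> nat \<Rightarrow> 'v list set" where
  "SAP E x0 n = (if n = 0 then {[x0]} else
     {xs. length xs = n \<and> distinct xs \<and> xs ! 0 = x0 \<and>
          (\<forall>i. Suc i < n \<longrightarrow> E (xs ! i) (xs ! Suc i)) \<and> E (xs ! (n - 1)) (xs ! 0)})"

definition cyclic_connective_constant :: "('v \<Rightarrow> 'v \<Rightarrow> bool) \<Rightarrow> 'v \<Rightarrow> real" where
  "cyclic_connective_constant E x0 =
     real_of_ereal (limsup (\<lambda>n. ereal (root n (real (card (SAP E x0 n))))))"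

definition perms_on :: "('v \<Rightarrow> 'v \<Rightarrow> bool) \<Rightarrow> 'v set \<Rightarrow> ('v \<Rightarrow> 'v) set" where
  "perms_on E U = {\<pi>. \<pi> permutes U \<and> (\<forall>x\<in>U. \<pi> x = x \<or> E x (\<pi> x))}"

definition ham :: "'v set \<Rightarrow> ('v \<Rightarrow> 'v) \<Rightarrow> nat" where
  "ham U \<pi> = card {x\<in>U. \<pi> x \<noteq> x}"

definition partition_fn :: "('v \<Rightarrow> 'v \<Rightarrow> bool) \<Rightarrow> real \<Rightarrow> 'v set \<Rightarrow> real" where
  "partition_fn E \<alpha> U = (\<Sum>\<pi>\<in>perms_on E U. exp (- \<alpha> * real (ham U \<pi>)))"

definition perm_prob :: "('v \<Rightarrow> 'v \<Rightarrow> bool) \<Rightarrow> real \<Rightarrow> 'v set \<Rightarrow> (('v \<Rightarrow> 'v) \<Rightarrow> bool) \<Rightarrow> real" where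
  "perm_prob E \<alpha> U A =
     (\<Sum>\<pi>\<in>{\<pi>\<in>perms_on E U. A \<pi>}. exp (- \<alpha> * real (ham U \<pi>))) / partition_fn E \<alpha> U"

definition cycle_len :: "('v \<Rightarrow> 'v) \<Rightarrow> 'v \<Rightarrow> nat" where
  "cycle_len \<pi> z = (if \<pi> z = z then 0 else card {(\<pi> ^^ i) z | i. True})"

end

theory Submission
  imports Defs "HOL-Combinatorics.Orbits" "HOL-Real_Asymp.Real_Asymp"
begin

text \<open>If the cycle of \<open>\<pi>\<close> through \<open>z\<close> has length \<open>n \<ge> 2\<close>, it is a closed self-avoiding path
  from \<open>z\<close>; by vertex transitivity there are at most \<open>|SAP n| \<le> K (\<mu> + \<epsilon>) ^ n\<close> such cycles.
  Fix one, \<open>x\<^sub>0 \<dots> x\<^sub>n\<^sub>-\<^sub>1\<close>, and cut it into the \<open>n div 2\<close> pairs \<open>{x\<^sub>2\<^sub>i, x\<^sub>2\<^sub>i\<^sub>+\<^sub>1}\<close>.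
  For each set \<open>S\<close> of pairs, replacing the cycle by the transpositions of the pairs in \<open>S\<close>
  (and fixed points elsewhere on it) is injective in \<open>(\<pi>, S)\<close> and removes \<open>n - 2|S|\<close> moved
  points. Summing over \<open>S\<close>, the weight of the permutations with this cycle times
  \<open>exp (\<alpha> n) (1 + exp (-2\<alpha>)) ^ (n div 2)\<close> is at most \<open>Z(U)\<close>. Hence
  \<open>P (|\<gamma>\<^sub>z| = n) \<le> C (\<rho> / exp (gain_rate \<alpha>)) ^ n\<close> for any \<open>\<rho> > \<mu>\<close>, a geometric tail as
  soon as \<open>exp (gain_rate \<alpha>) > \<mu>\<close>, i.e. \<open>\<alpha> > \<alpha>0\<close>. For large \<open>\<alpha>\<close> one may take
  \<open>\<rho> = \<mu> + 1\<close>, so the rate \<open>gain_rate \<alpha> - ln (\<mu> + 1)\<close> is asymptotic to \<open>\<alpha>\<close>.\<close>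

definition walks :: "('v \<Rightarrow> 'v \<Rightarrow> bool) \<Rightarrow> 'v \<Rightarrow> nat \<Rightarrow> 'v list set" where
  "walks E x m = {xs. length xs = Suc m \<and> xs ! 0 = x \<and> (\<forall>i<m. E (xs ! i) (xs ! Suc i))}"

lemma finite_walks:
  assumes "bounded_degree E"
  shows "finite (walks E x m)"
proof (induction m arbitrary: x)
  case 0
  have "walks E x 0 \<subseteq> {[x]}"
    unfolding walks_def by (auto simp: length_Suc_conv)
  then show ?case
    using finite_subset by blast
next
  case (Suc m)
  have "walks E x (Suc m) \<subseteq> (\<lambda>(y, ys). x # ys) ` (SIGMA y:{y. E x y}. walks E y m)"
  proof
    fix xs assume "xs \<in> walks E x (Suc m)"
    then have len: "length xs = Suc (Suc m)" and "xs ! 0 = x"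
      and step: "\<And>i. i < Suc m \<Longrightarrow> E (xs ! i) (xs ! Suc i)"
      by (auto simp: walks_def)
    then obtain y ys where xs: "xs = x # y # ys"
      by (auto simp: length_Suc_conv)
    have "E ((y # ys) ! i) ((y # ys) ! Suc i)" if "i < m" for i
      using step[of "Suc i"] that by (simp add: xs)
    then have "y # ys \<in> walks E y m"
      using len by (simp add: walks_def xs)
    moreover have "E x y"
      using step[of 0] by (simp add: xs)
    ultimately show "xs \<in> (\<lambda>(y, ys). x # ys) ` (SIGMA y:{y. E x y}. walks E y m)"
      by (intro rev_image_eqI[of "(y, y # ys)"]) (simp_all add: xs)
  qed
  moreover have "finite (SIGMA y:{y. E x y}. walks E y m)"
    using assms Suc unfolding bounded_degree_def by (intro finite_SigmaI) blast+
  ultimately show ?case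
    using finite_subset by blast
qed

lemma finite_SAP:
  assumes "bounded_degree E"
  shows "finite (SAP E x n)"
proof (cases n)
  case 0
  then show ?thesis by (simp add: SAP_def)
next
  case (Suc m)
  have "SAP E x n \<subseteq> walks E x m"
    using Suc unfolding SAP_def walks_def by auto
  then show ?thesis
    using finite_walks[OF assms] finite_subset by blast
qed

lemma card_SAP_le_vertex_transitive:
  assumes "bounded_degree E" and "vertex_transitive E"
  shows "card (SAP E z n) \<le> card (SAP E x0 n)"
proof -
  obtain \<psi> where "graph_automorphism E \<psi>" and \<psi>z: "\<psi> z = x0"
    using assms(2) unfolding vertex_transitive_def by blast
  then have inj: "inj \<psi>" and edge: "\<And>x y. E x y \<longleftrightarrow> E (\<psi> x) (\<psi> y)"
    unfolding graph_automorphism_def by (auto simp: bij_is_inj)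
  have "map \<psi> ` SAP E z n \<subseteq> SAP E x0 n"
    using \<psi>z inj edge unfolding SAP_def by (auto simp: distinct_map inj_on_def)
  moreover have "inj_on (map \<psi>) (SAP E z n)"
    using inj by (simp add: inj_on_def inj_map_eq_map)
  ultimately show ?thesis
    using card_inj_on_le finite_SAP[OF assms(1)] by blast
qed

lemma sum_Pow_power_card:
  fixes x :: "'a :: comm_semiring_1"
  assumes "finite A"
  shows "(\<Sum>S\<in>Pow A. x ^ card S) = (1 + x) ^ card A"
  using prod_add[OF assms, of "\<lambda>_. x" "\<lambda>_. 1"] assms
  by (simp add: add.commute finite_subset)

definition follows_cycle :: "('v \<Rightarrow> 'v) \<Rightarrow> 'v list \<Rightarrow> bool" where
  "follows_cycle \<pi> xs \<longleftrightarrow> (\<forall>i<length xs. \<pi> (xs ! i) = xs ! (Suc i mod length xs))"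

definition cycle_list :: "('v \<Rightarrow> 'v) \<Rightarrow> 'v \<Rightarrow> 'v list" where
  "cycle_list \<pi> z = map (\<lambda>i. (\<pi> ^^ i) z) [0..<cycle_len \<pi> z]"

lemma cycle_len_eq_funpow_dist1:
  assumes "\<pi> permutes U" and "finite U" and "\<pi> z \<noteq> z"
  shows "cycle_len \<pi> z = funpow_dist1 \<pi> z z"
proof -
  have z: "z \<in> orbit \<pi> z"
    using assms(1,2) by (intro permutation_self_in_orbit permutation_permutes[THEN iffD2]) blast
  have "{(\<pi> ^^ i) z | i. True} = (\<lambda>i. (\<pi> ^^ i) z) ` {0..<funpow_dist1 \<pi> z z}"
    using orbit_altdef_self_in[OF z] orbit_conv_funpow_dist1[OF z] by simp
  then show ?thesis
    unfolding cycle_len_def using assms(3) inj_on_funpow_dist1[OF z] by (simp add: card_image)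
qed

lemma
  assumes "\<pi> permutes U" and "finite U" and "\<pi> z \<noteq> z"
  shows cycle_len_ge_2: "2 \<le> cycle_len \<pi> z"
    and funpow_cycle_len: "(\<pi> ^^ cycle_len \<pi> z) z = z"
    and distinct_cycle_list: "distinct (cycle_list \<pi> z)"
proof -
  have z: "z \<in> orbit \<pi> z"
    using assms(1,2) by (intro permutation_self_in_orbit permutation_permutes[THEN iffD2]) blast
  note len = cycle_len_eq_funpow_dist1[OF assms]
  show funpow: "(\<pi> ^^ cycle_len \<pi> z) z = z"
    using funpow_dist1_prop[OF z] len by simp
  have "cycle_len \<pi> z \<noteq> 1"
    using funpow assms(3) by (metis One_nat_def funpow.simps comp_id id_apply)
  then show "2 \<le> cycle_len \<pi> z"
    using len by linarith
  have "inj_on (\<lambda>i. (\<pi> ^^ i) z) {0..<cycle_len \<pi> z}"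
    using inj_on_funpow_dist1[OF z] by (simp only: len)
  then show "distinct (cycle_list \<pi> z)"
    unfolding cycle_list_def distinct_map set_upt by simp
qed

lemma funpow_preserves_non_fixpoint:
  assumes "inj f" and "f x \<noteq> x"
  shows "f ((f ^^ n) x) \<noteq> (f ^^ n) x"
  using assms by (metis funpow_swap1 injD inj_fn)

lemma follows_cycle_cycle_list:
  assumes "\<pi> permutes U" and "finite U" and "\<pi> z \<noteq> z"
  shows "follows_cycle \<pi> (cycle_list \<pi> z)"
proof -
  define n where "n = cycle_len \<pi> z"
  have n: "2 \<le> n" "(\<pi> ^^ n) z = z"
    using cycle_len_ge_2[OF assms] funpow_cycle_len[OF assms] by (auto simp: n_def)
  have "\<pi> ((\<pi> ^^ i) z) = (\<pi> ^^ (Suc i mod n)) z" if "i < n" for i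
    using that n by (cases "Suc i = n") auto
  then show ?thesis
    using n unfolding follows_cycle_def cycle_list_def n_def[symmetric] by simp
qed

lemma set_cycle_list_subset:
  assumes "\<pi> permutes U" and "z \<in> U"
  shows "set (cycle_list \<pi> z) \<subseteq> U"
proof -
  have "(\<pi> ^^ i) z \<in> U" for i
    by (induction i) (auto simp: permutes_in_image[OF assms(1)] assms(2))
  then show ?thesis
    unfolding cycle_list_def by auto
qed

lemma cycle_list_in_SAP:
  assumes \<pi>: "\<pi> \<in> perms_on E U" and "finite U" and "z \<in> U" and "\<pi> z \<noteq> z"
  shows "cycle_list \<pi> z \<in> SAP E z (cycle_len \<pi> z)"
proof -
  have perm: "\<pi> permutes U"
    using \<pi> unfolding perms_on_def by simp
  define \<gamma> where "\<gamma> = cycle_list \<pi> z"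
  define n where "n = cycle_len \<pi> z"
  have n: "2 \<le> n" and len: "length \<gamma> = n" and dist: "distinct \<gamma>"
    using cycle_len_ge_2[OF perm assms(2,4)] distinct_cycle_list[OF perm assms(2,4)]
    by (auto simp: \<gamma>_def n_def cycle_list_def)
  have nth: "\<gamma> ! i = (\<pi> ^^ i) z" if "i < n" for i
    using that by (simp add: \<gamma>_def n_def cycle_list_def)
  have step: "\<pi> (\<gamma> ! i) = \<gamma> ! (Suc i mod n)" if "i < n" for i
    using follows_cycle_cycle_list[OF perm assms(2,4)] that len
    unfolding follows_cycle_def \<gamma>_def by simp
  have "E (\<gamma> ! i) (\<pi> (\<gamma> ! i))" if "i < n" for i
  proof -
    have "\<gamma> ! i \<in> U"
      using set_cycle_list_subset[OF perm assms(3)] that len by (auto simp: \<gamma>_def)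
    moreover have "\<pi> (\<gamma> ! i) \<noteq> \<gamma> ! i"
      using funpow_preserves_non_fixpoint[OF permutes_inj[OF perm] assms(4)] nth that by simp
    ultimately show ?thesis
      using \<pi> unfolding perms_on_def by blast
  qed
  then have edge: "E (\<gamma> ! i) (\<gamma> ! (Suc i mod n))" if "i < n" for i
    using that step by simp
  have "E (\<gamma> ! i) (\<gamma> ! Suc i)" if "Suc i < n" for i
    using edge[of i] that by simp
  moreover have "E (\<gamma> ! (n - 1)) (\<gamma> ! 0)"
    using edge[of "n - 1"] n by simp
  moreover have "\<gamma> ! 0 = z"
    using nth[of 0] n by simp
  ultimately show ?thesis
    using n len dist unfolding SAP_def \<gamma>_def[symmetric] n_def[symmetric] by auto
qed

definition mate :: "nat \<Rightarrow> nat" where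
  "mate j = (if even j then Suc j else j - 1)"

lemma mate_div_2 [simp]: "mate j div 2 = j div 2"
  unfolding mate_def by (cases "even j") (auto elim!: oddE)

lemma mate_mate [simp]: "mate (mate j) = j"
  unfolding mate_def by (cases "even j") (auto elim!: oddE)

lemma mate_neq: "mate j \<noteq> j"
  unfolding mate_def by (cases "even j") (auto elim!: oddE)

lemma mate_less: "j div 2 < n div 2 \<Longrightarrow> mate j < n"
  unfolding mate_def by (cases "even j") (auto elim!: oddE evenE)

lemma card_div_2_preimage:
  fixes n :: nat
  assumes "S \<subseteq> {..<n div 2}"
  shows "card {j. j < n \<and> j div 2 \<in> S} = 2 * card S"
proof -
  have "{j. j < n \<and> j div 2 \<in> S} = (\<lambda>i. 2 * i) ` S \<union> (\<lambda>i. Suc (2 * i)) ` S"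
  proof (intro set_eqI iffI)
    fix j assume "j \<in> {j. j < n \<and> j div 2 \<in> S}"
    then show "j \<in> (\<lambda>i. 2 * i) ` S \<union> (\<lambda>i. Suc (2 * i)) ` S"
      by (cases "even j") (auto elim!: evenE oddE)
  next
    fix j assume "j \<in> (\<lambda>i. 2 * i) ` S \<union> (\<lambda>i. Suc (2 * i)) ` S"
    then obtain i where "i \<in> S" "j = 2 * i \<or> j = Suc (2 * i)"
      by blast
    moreover have "i < n div 2"
      using assms \<open>i \<in> S\<close> by auto
    ultimately show "j \<in> {j. j < n \<and> j div 2 \<in> S}"
      by auto
  qed
  moreover have "card ((\<lambda>i. 2 * i) ` S \<union> (\<lambda>i. Suc (2 * i)) ` S) = card S + card S"
    using finite_subset[OF assms]
    by (subst card_Un_disjoint) (auto simp: card_image inj_on_def, presburger)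
  ultimately show ?thesis
    by simp
qed

text \<open>The path \<open>xs\<close> is cut into the pairs \<open>{xs ! 2i, xs ! (2i+1)}\<close>, \<open>i < length xs div 2\<close>;
  \<open>mate j\<close> is the other index of the pair containing \<open>j\<close>.\<close>

locale closed_path =
  fixes E :: "'v \<Rightarrow> 'v \<Rightarrow> bool" and U :: "'v set" and xs :: "'v list"
  assumes sym: "\<And>x y. E x y \<Longrightarrow> E y x"
    and finite_U: "finite U"
    and distinct: "distinct xs"
    and set_subset: "set xs \<subseteq> U"
    and length_ge_2: "2 \<le> length xs"
    and path: "\<And>i. Suc i < length xs \<Longrightarrow> E (xs ! i) (xs ! Suc i)"
begin

abbreviation pairs :: "nat set" where
  "pairs \<equiv> {..<length xs div 2}"

abbreviation cycle_perms :: "('v \<Rightarrow> 'v) set" where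
  "cycle_perms \<equiv> {\<pi> \<in> perms_on E U. follows_cycle \<pi> xs}"

definition pos :: "'v \<Rightarrow> nat" where
  "pos y = (THE j. j < length xs \<and> xs ! j = y)"

definition pair_swap :: "nat set \<Rightarrow> 'v \<Rightarrow> 'v" where
  "pair_swap S y = (if y \<in> set xs \<and> pos y div 2 \<in> S then xs ! mate (pos y) else y)"

definition break_cycle :: "('v \<Rightarrow> 'v) \<Rightarrow> nat set \<Rightarrow> 'v \<Rightarrow> 'v" where
  "break_cycle \<pi> S y = (if y \<in> set xs then pair_swap S y else \<pi> y)"

lemma pair_swap_nth:
  assumes "j < length xs"
  shows "pair_swap S (xs ! j) = (if j div 2 \<in> S then xs ! mate j else xs ! j)"
proof -
  have "pos (xs ! j) = j"
    unfolding pos_def using assms distinct by (auto simp: nth_eq_iff_index_eq)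
  then show ?thesis
    using assms unfolding pair_swap_def by simp
qed

lemma
  assumes "S \<subseteq> pairs" and "y \<in> set xs"
  shows pair_swap_in_set: "pair_swap S y \<in> set xs"
    and pair_swap_pair_swap: "pair_swap S (pair_swap S y) = y"
    and pair_swap_edge: "pair_swap S y \<noteq> y \<Longrightarrow> E y (pair_swap S y)"
proof -
  obtain j where j: "j < length xs" "y = xs ! j"
    using assms(2) by (auto simp: in_set_conv_nth)
  have mate: "mate j < length xs" if "j div 2 \<in> S"
    using assms(1) that by (intro mate_less) auto
  show "pair_swap S y \<in> set xs"
    using j mate by (simp add: pair_swap_nth)
  show "pair_swap S (pair_swap S y) = y"
    using j mate by (simp add: pair_swap_nth)
  show "E y (pair_swap S y)" if "pair_swap S y \<noteq> y"
  proof -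
    have S: "j div 2 \<in> S"
      using that j by (auto simp: pair_swap_nth split: if_splits)
    show ?thesis
    proof (cases "even j")
      case True
      then show ?thesis
        using j S mate path[of j] by (simp add: pair_swap_nth mate_def)
    next
      case False
      then obtain i where "j = Suc (2 * i)"
        by (auto elim!: oddE)
      then show ?thesis
        using j S path[of "2 * i"] sym by (simp add: pair_swap_nth mate_def)
    qed
  qed
qed

lemma pair_swap_moves_iff:
  assumes "S \<subseteq> pairs" and "j < length xs"
  shows "pair_swap S (xs ! j) \<noteq> xs ! j \<longleftrightarrow> j div 2 \<in> S"
  using assms mate_less[of j "length xs"] mate_neq[of j] distinct
  by (auto simp: pair_swap_nth nth_eq_iff_index_eq)

lemma
  assumes "\<pi> \<in> cycle_perms"
  shows cycle_perms_image_set: "\<pi> ` set xs = set xs"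
    and cycle_perms_moves: "y \<in> set xs \<Longrightarrow> \<pi> y \<noteq> y"
proof -
  have step: "\<pi> (xs ! j) = xs ! (Suc j mod length xs)" if "j < length xs" for j
    using assms that unfolding follows_cycle_def by simp
  have inj: "inj \<pi>"
    using assms unfolding perms_on_def by (auto intro: permutes_inj)
  have mod_less: "Suc j mod length xs < length xs" for j
    using length_ge_2 by (intro mod_less_divisor) linarith
  have "\<pi> (xs ! j) \<in> set xs" if "j < length xs" for j
    using step[OF that] mod_less by simp
  then have "\<pi> ` set xs \<subseteq> set xs"
    by (auto simp: in_set_conv_nth)
  then show "\<pi> ` set xs = set xs"
    using endo_inj_surj[of "set xs" \<pi>] inj by (auto simp: inj_on_subset)
  show "\<pi> y \<noteq> y" if y: "y \<in> set xs"
  proof -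
    obtain j where j: "j < length xs" "y = xs ! j"
      using y by (auto simp: in_set_conv_nth)
    have "Suc j mod length xs \<noteq> j"
      using j(1) length_ge_2 by (cases "Suc j = length xs") auto
    then show ?thesis
      using step[OF j(1)] j mod_less distinct by (simp add: nth_eq_iff_index_eq)
  qed
qed

lemma break_cycle_in_perms_on:
  assumes \<pi>: "\<pi> \<in> cycle_perms" and S: "S \<subseteq> pairs"
  shows "break_cycle \<pi> S \<in> perms_on E U"
proof -
  have perm: "\<pi> permutes U"
    using \<pi> unfolding perms_on_def by simp
  have inj: "inj_on (break_cycle \<pi> S) U"
  proof (rule inj_onI)
    fix a b assume "a \<in> U" "b \<in> U" and eq: "break_cycle \<pi> S a = break_cycle \<pi> S b"
    have "\<pi> a \<in> set xs \<longleftrightarrow> a \<in> set xs" for a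
      using cycle_perms_image_set[OF \<pi>] inj_image_mem_iff[OF permutes_inj[OF perm]] by metis
    then show "a = b"
      using eq pair_swap_pair_swap[OF S] pair_swap_in_set[OF S] permutes_inj[OF perm]
      unfolding break_cycle_def by (metis injD)
  qed
  have "break_cycle \<pi> S ` U \<subseteq> U"
    using pair_swap_in_set[OF S] set_subset permutes_in_image[OF perm]
    unfolding break_cycle_def by auto
  then have "bij_betw (break_cycle \<pi> S) U U"
    using endo_inj_surj[OF finite_U _ inj] inj by (simp add: bij_betw_def)
  moreover have "break_cycle \<pi> S y = y" if "y \<notin> U" for y
    using that set_subset permutes_not_in[OF perm] unfolding break_cycle_def by auto
  ultimately have "break_cycle \<pi> S permutes U"
    by (rule bij_imp_permutes)
  moreover have "break_cycle \<pi> S y = y \<or> E y (break_cycle \<pi> S y)" if "y \<in> U" for y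
    using that \<pi> pair_swap_edge[OF S] unfolding break_cycle_def perms_on_def by auto
  ultimately show ?thesis
    unfolding perms_on_def by blast
qed

lemma ham_break_cycle:
  assumes \<pi>: "\<pi> \<in> cycle_perms" and S: "S \<subseteq> pairs"
  shows "ham U (break_cycle \<pi> S) + length xs = ham U \<pi> + 2 * card S"
proof -
  define R where "R = {y \<in> U. y \<notin> set xs \<and> \<pi> y \<noteq> y}"
  define J where "J = {j. j < length xs \<and> j div 2 \<in> S}"
  have "{y \<in> U. \<pi> y \<noteq> y} = R \<union> set xs"
    using cycle_perms_moves[OF \<pi>] set_subset by (auto simp: R_def)
  then have "ham U \<pi> = card (R \<union> set xs)"
    by (simp add: ham_def)
  also have "\<dots> = card R + length xs"
    using finite_U distinct_card[OF distinct] by (subst card_Un_disjoint) (auto simp: R_def)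
  finally have "ham U \<pi> = card R + length xs" .
  moreover have "{y \<in> U. break_cycle \<pi> S y \<noteq> y} = R \<union> (\<lambda>j. xs ! j) ` J"
    using set_subset nth_mem[of _ xs] pair_swap_moves_iff[OF S]
    by (auto simp: R_def J_def break_cycle_def in_set_conv_nth)
  moreover have "card ((\<lambda>j. xs ! j) ` J) = 2 * card S"
  proof -
    have "inj_on (\<lambda>j. xs ! j) J"
      using distinct unfolding J_def inj_on_def by (auto simp: nth_eq_iff_index_eq)
    then show ?thesis
      using card_image card_div_2_preimage[OF S] unfolding J_def by metis
  qed
  moreover have "card (R \<union> (\<lambda>j. xs ! j) ` J) = card R + card ((\<lambda>j. xs ! j) ` J)"
    using finite_U by (intro card_Un_disjoint) (auto simp: R_def J_def)
  ultimately show ?thesis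
    unfolding ham_def by simp
qed

lemma inj_on_break_cycle:
  "inj_on (\<lambda>(\<pi>, S). break_cycle \<pi> S) (cycle_perms \<times> Pow pairs)"
proof (rule inj_onI)
  fix p q
  assume "p \<in> cycle_perms \<times> Pow pairs" "q \<in> cycle_perms \<times> Pow pairs"
    and "(\<lambda>(\<pi>, S). break_cycle \<pi> S) p = (\<lambda>(\<pi>, S). break_cycle \<pi> S) q"
  moreover obtain \<pi> S \<pi>' S' where pq: "p = (\<pi>, S)" "q = (\<pi>', S')"
    by (cases p, cases q)
  ultimately have \<pi>: "\<pi> \<in> cycle_perms" "\<pi>' \<in> cycle_perms" and S: "S \<subseteq> pairs" "S' \<subseteq> pairs"
    and eq: "break_cycle \<pi> S = break_cycle \<pi>' S'"
    by auto
  have "\<pi> y = \<pi>' y" for y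
  proof (cases "y \<in> set xs")
    case True
    then obtain j where "j < length xs" "y = xs ! j"
      by (auto simp: in_set_conv_nth)
    then show ?thesis
      using \<pi> unfolding follows_cycle_def by simp
  next
    case False
    then show ?thesis
      using fun_cong[OF eq, of y] unfolding break_cycle_def by simp
  qed
  moreover have "i \<in> S \<longleftrightarrow> i \<in> S'" for i
  proof (cases "i < length xs div 2")
    case True
    then have i: "2 * i < length xs"
      by linarith
    then have "pair_swap S (xs ! (2 * i)) = pair_swap S' (xs ! (2 * i))"
      using fun_cong[OF eq, of "xs ! (2 * i)"] unfolding break_cycle_def by simp
    then show ?thesis
      using pair_swap_moves_iff[OF S(1) i] pair_swap_moves_iff[OF S(2) i] by simp
  next
    case False
    then show ?thesis
      using S by auto
  qed
  ultimately show "p = q"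
    using pq by auto
qed

lemma cycle_perms_weight_le_partition_fn:
  fixes \<alpha> :: real
  shows "(\<Sum>\<pi>\<in>cycle_perms. exp (- \<alpha> * real (ham U \<pi>)))
           * exp (\<alpha> * real (length xs)) * (1 + exp (-2*\<alpha>)) ^ (length xs div 2)
         \<le> partition_fn E \<alpha> U"
proof -
  let ?w = "\<lambda>\<pi>. exp (- \<alpha> * real (ham U \<pi>))"
  let ?gain = "\<lambda>S. exp (\<alpha> * real (length xs)) * exp (-2*\<alpha>) ^ card S"
  have weight: "?w (break_cycle \<pi> S) = ?w \<pi> * ?gain S" if "\<pi> \<in> cycle_perms" "S \<in> Pow pairs" for \<pi> S
  proof -
    have "real (ham U (break_cycle \<pi> S)) + real (length xs) = real (ham U \<pi>) + 2 * real (card S)"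
      using ham_break_cycle[OF that(1)] that(2) by (simp flip: of_nat_add)
    then have ham: "real (ham U (break_cycle \<pi> S)) = real (ham U \<pi>) + 2 * real (card S) - real (length xs)"
      by linarith
    show ?thesis
      by (simp add: ham exp_of_nat_mult[symmetric] mult_exp_exp algebra_simps)
  qed
  have "(1 + exp (-2*\<alpha>)) ^ (length xs div 2) = (\<Sum>S\<in>Pow pairs. exp (-2*\<alpha>) ^ card S)"
    using sum_Pow_power_card[of pairs "exp (-2*\<alpha>)"] by simp
  then have "(\<Sum>\<pi>\<in>cycle_perms. ?w \<pi>) * exp (\<alpha> * real (length xs)) * (1 + exp (-2*\<alpha>)) ^ (length xs div 2)
      = (\<Sum>\<pi>\<in>cycle_perms. \<Sum>S\<in>Pow pairs. ?w \<pi> * ?gain S)"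
    by (simp add: sum_distrib_left sum_distrib_right mult.assoc) (rule sum.swap)
  also have "\<dots> = (\<Sum>\<pi>\<in>cycle_perms. \<Sum>S\<in>Pow pairs. ?w (break_cycle \<pi> S))"
    by (intro sum.cong refl) (simp only: weight)
  also have "\<dots> = (\<Sum>(\<pi>, S)\<in>cycle_perms \<times> Pow pairs. ?w (break_cycle \<pi> S))"
    by (rule sum.cartesian_product)
  also have "\<dots> = (\<Sum>\<sigma>\<in>(\<lambda>(\<pi>, S). break_cycle \<pi> S) ` (cycle_perms \<times> Pow pairs). ?w \<sigma>)"
    by (subst sum.reindex[OF inj_on_break_cycle]) (simp add: case_prod_beta)
  also have "\<dots> \<le> (\<Sum>\<sigma>\<in>perms_on E U. ?w \<sigma>)"
    using finite_permutations[OF finite_U] break_cycle_in_perms_on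
    by (intro sum_mono2) (auto simp: perms_on_def intro: rev_finite_subset)
  finally show ?thesis
    unfolding partition_fn_def .
qed

end

lemma finite_perms_on: "finite U \<Longrightarrow> finite (perms_on E U)"
  using finite_permutations unfolding perms_on_def by (rule rev_finite_subset) auto

lemma partition_fn_pos:
  assumes "finite U"
  shows "0 < partition_fn E \<alpha> U"
proof -
  have "id \<in> perms_on E U"
    unfolding perms_on_def by (auto simp: permutes_id)
  then have "exp (- \<alpha> * real (ham U id)) \<le> partition_fn E \<alpha> U"
    unfolding partition_fn_def by (rule member_le_sum) (auto simp: finite_perms_on[OF assms])
  moreover have "0 < exp (- \<alpha> * real (ham U id))"
    by simp
  ultimately show ?thesis
    by linarith
qed

lemma closed_path_cycle_list:
  assumes "simple_graph E" and \<pi>: "\<pi> \<in> perms_on E U" and "finite U" and "z \<in> U" and "\<pi> z \<noteq> z"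
  shows "closed_path E U (cycle_list \<pi> z)"
proof -
  have perm: "\<pi> permutes U"
    using \<pi> unfolding perms_on_def by simp
  have "2 \<le> length (cycle_list \<pi> z)"
    using cycle_len_ge_2[OF perm assms(3,5)] by (simp add: cycle_list_def)
  moreover have "cycle_list \<pi> z \<in> SAP E z (length (cycle_list \<pi> z))"
    using cycle_list_in_SAP[OF assms(2-5)] by (simp add: cycle_list_def)
  ultimately have "Suc i < length (cycle_list \<pi> z) \<Longrightarrow> E (cycle_list \<pi> z ! i) (cycle_list \<pi> z ! Suc i)" for i
    unfolding SAP_def by (auto split: if_splits)
  then show ?thesis
    using assms set_cycle_list_subset[OF perm] distinct_cycle_list[OF perm] \<open>2 \<le> length (cycle_list \<pi> z)\<close>
    unfolding closed_path_def simple_graph_def by blast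
qed

lemma weight_cycle_len_eq_le:
  fixes \<alpha> :: real
  assumes "simple_graph E" and "bounded_degree E" and "vertex_transitive E"
    and "finite U" and "z \<in> U" and "n \<noteq> 0"
  shows "(\<Sum>\<pi>\<in>{\<pi> \<in> perms_on E U. cycle_len \<pi> z = n}. exp (- \<alpha> * real (ham U \<pi>)))
           * (exp (\<alpha> * real n) * (1 + exp (-2*\<alpha>)) ^ (n div 2))
         \<le> real (card (SAP E x0 n)) * partition_fn E \<alpha> U"
proof -
  let ?w = "\<lambda>\<pi>. exp (- \<alpha> * real (ham U \<pi>))"
  let ?gain = "exp (\<alpha> * real n) * (1 + exp (-2*\<alpha>)) ^ (n div 2)"
  define A where "A = {\<pi> \<in> perms_on E U. cycle_len \<pi> z = n}"
  have A: "\<pi> \<in> perms_on E U \<and> \<pi> z \<noteq> z \<and> cycle_len \<pi> z = n" if "\<pi> \<in> A" for \<pi>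
    using that assms(6) unfolding A_def cycle_len_def by auto
  have Z: "0 \<le> partition_fn E \<alpha> U"
    using less_imp_le[OF partition_fn_pos[OF assms(4)]] .
  have cycles: "(\<lambda>\<pi>. cycle_list \<pi> z) ` A \<subseteq> SAP E z n"
    using cycle_list_in_SAP[OF _ assms(4,5)] A by force
  have fiber: "(\<Sum>\<pi>\<in>{\<pi> \<in> A. cycle_list \<pi> z = \<gamma>}. ?w \<pi>) * ?gain \<le> partition_fn E \<alpha> U"
    if img: "\<gamma> \<in> (\<lambda>\<pi>. cycle_list \<pi> z) ` A" for \<gamma>
  proof -
    obtain \<pi>\<^sub>0 where "\<pi>\<^sub>0 \<in> A" and \<gamma>: "\<gamma> = cycle_list \<pi>\<^sub>0 z"
      using img by blast
    then interpret closed_path E U \<gamma>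
      using closed_path_cycle_list[OF assms(1) _ assms(4,5)] A by blast
    have "length \<gamma> = n"
      using \<gamma> A[OF \<open>\<pi>\<^sub>0 \<in> A\<close>] by (simp add: cycle_list_def)
    have "{\<pi> \<in> A. cycle_list \<pi> z = \<gamma>} \<subseteq> {\<pi> \<in> perms_on E U. follows_cycle \<pi> \<gamma>}"
      using A follows_cycle_cycle_list[OF _ assms(4)] by (auto simp: perms_on_def)
    then have "(\<Sum>\<pi>\<in>{\<pi> \<in> A. cycle_list \<pi> z = \<gamma>}. ?w \<pi>) \<le> (\<Sum>\<pi>\<in>{\<pi> \<in> perms_on E U. follows_cycle \<pi> \<gamma>}. ?w \<pi>)"
      using finite_perms_on[OF assms(4)] by (intro sum_mono2) auto
    then show ?thesis
      using cycle_perms_weight_le_partition_fn[of \<alpha>] \<open>length \<gamma> = n\<close>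
      by (smt (verit, best) mult.assoc mult_right_mono exp_ge_zero zero_le_power add_nonneg_nonneg zero_le_one)
  qed
  have "(\<Sum>\<pi>\<in>A. ?w \<pi>) = (\<Sum>\<gamma>\<in>(\<lambda>\<pi>. cycle_list \<pi> z) ` A. \<Sum>\<pi>\<in>{\<pi> \<in> A. cycle_list \<pi> z = \<gamma>}. ?w \<pi>)"
    using finite_perms_on[OF assms(4)] by (intro sum.image_gen) (simp add: A_def)
  then have "(\<Sum>\<pi>\<in>A. ?w \<pi>) * ?gain = (\<Sum>\<gamma>\<in>(\<lambda>\<pi>. cycle_list \<pi> z) ` A. (\<Sum>\<pi>\<in>{\<pi> \<in> A. cycle_list \<pi> z = \<gamma>}. ?w \<pi>) * ?gain)"
    by (simp only: sum_distrib_right)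
  also have "\<dots> \<le> real (card ((\<lambda>\<pi>. cycle_list \<pi> z) ` A)) * partition_fn E \<alpha> U"
    using sum_mono[OF fiber] by simp
  also have "\<dots> \<le> real (card (SAP E x0 n)) * partition_fn E \<alpha> U"
    using card_mono[OF finite_SAP[OF assms(2)] cycles] card_SAP_le_vertex_transitive[OF assms(2,3)] Z
    by (intro mult_right_mono) (auto intro: order.trans)
  finally show ?thesis
    unfolding A_def .
qed

lemma exponential_bound_if_limsup_root_less:
  fixes c :: "nat \<Rightarrow> real"
  assumes c: "\<And>n. 0 \<le> c n" and \<rho>: "0 < \<rho>"
    and limsup: "limsup (\<lambda>n. ereal (root n (c n))) < ereal \<rho>"
  shows "\<exists>K>0. \<forall>n. c n \<le> K * \<rho> ^ n"
proof -
  obtain N where N: "\<And>n. N \<le> n \<Longrightarrow> root n (c n) < \<rho>"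
    using Limsup_lessD[OF limsup] by (auto simp: eventually_sequentially)
  define K where "K = 1 + (\<Sum>n\<le>N. c n / \<rho> ^ n)"
  have K: "1 \<le> K"
    unfolding K_def using c \<rho> by (simp add: sum_nonneg)
  have "c n \<le> K * \<rho> ^ n" for n
  proof (cases "n \<le> N")
    case True
    have "c n / \<rho> ^ n \<le> (\<Sum>n\<le>N. c n / \<rho> ^ n)"
      using True c \<rho> by (intro member_le_sum) auto
    then have "c n / \<rho> ^ n \<le> K"
      unfolding K_def by linarith
    then show ?thesis
      using \<rho> by (simp add: divide_le_eq mult.commute)
  next
    case False
    then have "c n = root n (c n) ^ n"
      using c by simp
    also have "\<dots> \<le> \<rho> ^ n"
      using N[of n] False c[of n] by (intro power_mono) auto
    also have "\<dots> \<le> K * \<rho> ^ n"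
      using K \<rho> by simp
    finally show ?thesis .
  qed
  then show ?thesis
    using K by (intro exI[of _ K]) auto
qed

lemma card_SAP_le_exponential:
  assumes "0 < cyclic_connective_constant E x0" and "0 < \<epsilon>"
  shows "\<exists>K>0. \<forall>n. real (card (SAP E x0 n)) \<le> K * (cyclic_connective_constant E x0 + \<epsilon>) ^ n"
proof (rule exponential_bound_if_limsup_root_less)
  let ?L = "limsup (\<lambda>n. ereal (root n (real (card (SAP E x0 n)))))"
  have "real_of_ereal ?L = cyclic_connective_constant E x0"
    by (simp add: cyclic_connective_constant_def)
  then have "?L = ereal (cyclic_connective_constant E x0)"
    using assms(1) by (cases ?L) auto
  then show "?L < ereal (cyclic_connective_constant E x0 + \<epsilon>)"
    using assms(2) by simp
qed (use assms in auto)

text \<open>\<open>exp (gain_rate \<alpha> * n)\<close> is, up to the factor \<open>sqrt (1 + exp (-2\<alpha>))\<close>, the gain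
  \<open>exp (\<alpha> n) (1 + exp (-2\<alpha>)) ^ (n div 2)\<close> from breaking a cycle of length \<open>n\<close>;
  the threshold \<open>\<alpha>0\<close> of the theorem solves \<open>gain_rate \<alpha>0 = ln \<mu>\<close>.\<close>

definition gain_rate :: "real \<Rightarrow> real" where
  "gain_rate a = a + ln (1 + exp (-2*a)) / 2"

lemma gain_rate_eq: "gain_rate a = ln (exp (2*a) + 1) / 2"
proof -
  have "exp (2*a) + 1 = exp (2*a) * (1 + exp (-2*a))"
    by (simp add: distrib_left flip: exp_add)
  moreover have "1 + exp (-2*a) \<noteq> 0"
    by (smt (verit) exp_gt_zero)
  ultimately have "ln (exp (2*a) + 1) = 2*a + ln (1 + exp (-2*a))"
    by (simp add: ln_mult)
  then show ?thesis
    by (simp add: gain_rate_def)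
qed

lemma strict_mono_gain_rate: "strict_mono gain_rate"
  by (rule strict_monoI) (simp add: gain_rate_eq add_pos_pos)

lemma le_gain_rate: "a \<le> gain_rate a"
  by (simp add: gain_rate_def)

lemma exp_gain_rate_le:
  "exp (gain_rate a * real n) \<le> sqrt (1 + exp (-2*a)) * (exp (a * real n) * (1 + exp (-2*a)) ^ (n div 2))"
proof -
  define x where "x = 1 + exp (-2*a)"
  have x: "1 \<le> x"
    by (simp add: x_def)
  have "exp (gain_rate a * real n) = exp (a * real n) * exp (ln x * (real n / 2))"
    by (simp add: gain_rate_def x_def algebra_simps flip: exp_add)
  also have "exp (ln x * (real n / 2)) = x powr (real n / 2)"
    using x by (simp add: powr_def)
  also have "x powr (real n / 2) \<le> x powr (1/2 + real (n div 2))"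
    using x by (intro powr_mono) linarith+
  also have "x powr (1/2 + real (n div 2)) = sqrt x * x ^ (n div 2)"
    using x by (simp add: powr_add powr_half_sqrt powr_realpow)
  finally show ?thesis
    by (simp add: x_def algebra_simps)
qed

lemma weight_cycle_len_eq_le_exp:
  fixes \<alpha> :: real
  assumes "simple_graph E" and "bounded_degree E" and "vertex_transitive E"
    and "finite U" and "z \<in> U" and "n \<noteq> 0"
  shows "(\<Sum>\<pi>\<in>{\<pi> \<in> perms_on E U. cycle_len \<pi> z = n}. exp (- \<alpha> * real (ham U \<pi>)))
         \<le> sqrt (1 + exp (-2*\<alpha>)) * real (card (SAP E x0 n)) * exp (- gain_rate \<alpha> * real n)
             * partition_fn E \<alpha> U"
proof -
  define W where "W = (\<Sum>\<pi>\<in>{\<pi> \<in> perms_on E U. cycle_len \<pi> z = n}. exp (- \<alpha> * real (ham U \<pi>)))"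
  define s where "s = sqrt (1 + exp (-2*\<alpha>))"
  have "W * exp (gain_rate \<alpha> * real n) \<le> s * (W * (exp (\<alpha> * real n) * (1 + exp (-2*\<alpha>)) ^ (n div 2)))"
    using exp_gain_rate_le[of \<alpha> n] mult_left_mono[of _ _ W]
    by (fastforce simp: W_def s_def algebra_simps intro: sum_nonneg)
  also have "\<dots> \<le> s * (real (card (SAP E x0 n)) * partition_fn E \<alpha> U)"
    using weight_cycle_len_eq_le[OF assms, of \<alpha> x0] by (intro mult_left_mono) (simp_all add: W_def s_def)
  finally show ?thesis
    by (simp add: W_def s_def exp_minus field_simps)
qed

lemma sum_power_above_le:
  fixes q :: real
  assumes "0 \<le> q" and "q < 1" and "finite S" and "\<forall>n\<in>S. l < n"
  shows "(\<Sum>n\<in>S. q ^ n) \<le> q ^ Suc l / (1 - q)"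
proof -
  obtain M where "\<forall>n\<in>S. n < M"
    using assms(3) finite_nat_bounded by blast
  have "S \<subseteq> (\<lambda>i. Suc l + i) ` {..<M}"
  proof
    fix n assume "n \<in> S"
    then have "n = Suc l + (n - Suc l)" "n - Suc l < M"
      using assms(4) \<open>\<forall>n\<in>S. n < M\<close> by auto
    then show "n \<in> (\<lambda>i. Suc l + i) ` {..<M}"
      by blast
  qed
  then have "(\<Sum>n\<in>S. q ^ n) \<le> (\<Sum>n\<in>(\<lambda>i. Suc l + i) ` {..<M}. q ^ n)"
    using assms(1) by (intro sum_mono2) auto
  also have "\<dots> = q ^ Suc l * (\<Sum>i<M. q ^ i)"
    by (subst sum.reindex) (auto simp: inj_on_def power_add sum_distrib_left mult.assoc)
  also have "\<dots> = q ^ Suc l * ((1 - q ^ M) / (1 - q))"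
    using assms(2) by (simp add: sum_gp_strict)
  also have "\<dots> \<le> q ^ Suc l / (1 - q)"
    using assms(1,2) by (simp add: divide_right_mono mult_left_le)
  finally show ?thesis .
qed

lemma perm_prob_cycle_len_greater_le:
  fixes \<alpha> \<rho> K :: real
  assumes "simple_graph E" and "bounded_degree E" and "vertex_transitive E"
    and U: "finite U" "z \<in> U"
    and K: "\<forall>n. real (card (SAP E x0 n)) \<le> K * \<rho> ^ n" and "0 < K" and "0 < \<rho>"
    and \<rho>_less: "\<rho> < exp (gain_rate \<alpha>)"
  defines "q \<equiv> \<rho> * exp (- gain_rate \<alpha>)"
  shows "perm_prob E \<alpha> U (\<lambda>\<pi>. cycle_len \<pi> z > l) \<le> K * sqrt (1 + exp (-2*\<alpha>)) / (1 - q) * q ^ l"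
proof -
  let ?w = "\<lambda>\<pi>. exp (- \<alpha> * real (ham U \<pi>))"
  define s where "s = sqrt (1 + exp (-2*\<alpha>))"
  define Z where "Z = partition_fn E \<alpha> U"
  define B where "B = {\<pi> \<in> perms_on E U. l < cycle_len \<pi> z}"
  have q: "0 \<le> q" "q < 1"
    using \<open>0 < \<rho>\<close> \<rho>_less by (simp_all add: q_def exp_minus field_simps)
  have s: "0 < s"
    by (simp add: s_def add_pos_pos)
  have Z: "0 < Z"
    using partition_fn_pos[OF U(1)] by (simp add: Z_def)
  have fin: "finite B"
    using finite_perms_on[OF U(1)] by (simp add: B_def)
  have level: "(\<Sum>\<pi>\<in>{\<pi> \<in> B. cycle_len \<pi> z = n}. ?w \<pi>) \<le> K * s * Z * q ^ n"
    if "n \<in> (\<lambda>\<pi>. cycle_len \<pi> z) ` B" for n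
  proof -
    have "l < n"
      using that by (auto simp: B_def)
    then have "{\<pi> \<in> B. cycle_len \<pi> z = n} = {\<pi> \<in> perms_on E U. cycle_len \<pi> z = n}"
      by (auto simp: B_def)
    moreover have "s * real (card (SAP E x0 n)) * exp (- gain_rate \<alpha> * real n) * Z
        \<le> s * (K * \<rho> ^ n) * exp (- gain_rate \<alpha> * real n) * Z"
      using K s Z by (intro mult_right_mono mult_left_mono) auto
    moreover have q_pow: "\<rho> ^ n * exp (- gain_rate \<alpha> * real n) = q ^ n"
      by (simp add: q_def power_mult_distrib exp_of_nat_mult[symmetric] mult.commute)
    ultimately show ?thesis
      using weight_cycle_len_eq_le_exp[OF assms(1-3) U, of n \<alpha> x0] \<open>l < n\<close>
      by (simp add: Z_def s_def mult_ac flip: q_pow)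
  qed
  have "(\<Sum>\<pi>\<in>B. ?w \<pi>) = (\<Sum>n\<in>(\<lambda>\<pi>. cycle_len \<pi> z) ` B. \<Sum>\<pi>\<in>{\<pi> \<in> B. cycle_len \<pi> z = n}. ?w \<pi>)"
    by (rule sum.image_gen[OF fin])
  also have "\<dots> \<le> K * s * Z * (\<Sum>n\<in>(\<lambda>\<pi>. cycle_len \<pi> z) ` B. q ^ n)"
    using sum_mono[OF level] by (simp add: sum_distrib_left)
  also have "\<dots> \<le> K * s * Z * (q ^ Suc l / (1 - q))"
    using q fin \<open>0 < K\<close> s Z by (intro mult_left_mono sum_power_above_le) (auto simp: B_def)
  also have "\<dots> \<le> K * s * Z * (q ^ l / (1 - q))"
    using q \<open>0 < K\<close> s Z by (intro mult_left_mono divide_right_mono) (auto simp: mult_left_le_one_le)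
  finally have "(\<Sum>\<pi>\<in>B. ?w \<pi>) / Z \<le> K * s / (1 - q) * q ^ l"
    using Z by (simp add: divide_le_eq algebra_simps)
  then show ?thesis
    by (simp add: perm_prob_def B_def Z_def s_def)
qed

lemma cycle_len_tail_bound:
  fixes \<alpha> \<rho> K :: real
  assumes "simple_graph E" and "bounded_degree E" and "vertex_transitive E"
    and "\<forall>n. real (card (SAP E x0 n)) \<le> K * \<rho> ^ n" and "0 < K" and "0 < \<rho>"
    and \<rho>_less: "\<rho> < exp (gain_rate \<alpha>)"
  defines "c \<equiv> gain_rate \<alpha> - ln \<rho>"
    and "C \<equiv> K * sqrt (1 + exp (-2*\<alpha>)) / (1 - exp (- (gain_rate \<alpha> - ln \<rho>)))"
  shows "0 < C \<and> 0 < c \<and> (\<forall>U z (l::nat). finite U \<longrightarrow> z \<in> U \<longrightarrow>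
           perm_prob E \<alpha> U (\<lambda>\<pi>. cycle_len \<pi> z > l) \<le> C * exp (- c * real l))"
proof -
  have q: "exp (- c) = \<rho> * exp (- gain_rate \<alpha>)"
    using \<open>0 < \<rho>\<close> by (simp add: c_def exp_diff exp_minus divide_inverse)
  have "ln \<rho> < gain_rate \<alpha>"
    using ln_less_cancel_iff[of \<rho> "exp (gain_rate \<alpha>)"] \<rho>_less \<open>0 < \<rho>\<close> by simp
  then have "0 < c" and "exp (- c) < 1"
    by (simp_all add: c_def)
  moreover have "0 < C"
    using \<open>exp (- c) < 1\<close> \<open>0 < K\<close> by (simp add: C_def c_def[symmetric] add_pos_pos)
  moreover have "exp (- c * real l) = exp (- c) ^ l" for l :: nat
    by (simp add: exp_of_nat_mult[symmetric] mult.commute)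
  ultimately show ?thesis
    using perm_prob_cycle_len_greater_le[OF assms(1-3) _ _ assms(4-7)]
    by (simp add: C_def c_def[symmetric] q)
qed

lemma eventually_min_exp_gain_rate:
  "eventually (\<lambda>a. min c ((\<mu> + exp (gain_rate a)) / 2) = c) at_top" if "0 \<le> \<mu>" for c \<mu> :: real
proof -
  have "eventually (\<lambda>a. 2 * c \<le> exp a) at_top"
    using filterlim_at_top exp_at_top by blast
  then show ?thesis
  proof (rule eventually_mono)
    fix a :: real assume "2 * c \<le> exp a"
    also have "exp a \<le> exp (gain_rate a)"
      using le_gain_rate by simp
    finally have "c \<le> (\<mu> + exp (gain_rate a)) / 2"
      using that by (simp add: field_simps)
    then show "min c ((\<mu> + exp (gain_rate a)) / 2) = c"
      by (simp add: min_def)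
  qed
qed

lemma less_exp_gain_rate:
  assumes "0 < \<mu>" and "gain_rate \<alpha>0 = ln \<mu>" and "\<alpha>0 < a"
  shows "\<mu> < exp (gain_rate a)"
proof -
  have "exp (ln \<mu>) < exp (gain_rate a)"
    using strict_monoD[OF strict_mono_gain_rate assms(3)] assms(2) by simp
  then show ?thesis
    using assms(1) by simp
qed

lemma
  fixes \<mu> e :: real
  assumes "\<mu> < e"
  shows less_min_midpoint: "\<mu> < min (\<mu> + 1) ((\<mu> + e) / 2)"
    and min_midpoint_less: "min (\<mu> + 1) ((\<mu> + e) / 2) < e"
  using less_half_sum[OF assms] gt_half_sum[OF assms] by (simp_all add: one_add_one min_less_iff_disj)

lemma
  fixes \<rho> f :: "real \<Rightarrow> real"
  assumes \<rho>: "eventually (\<lambda>a. \<rho> a = \<mu> + 1) at_top"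
  shows decay_rate_over_tendsto: "((\<lambda>a. (gain_rate a - ln (\<rho> a)) / a) \<longlongrightarrow> 1) at_top"
    and prefactor_tendsto:
      "((\<lambda>a. f (\<rho> a - \<mu>) * sqrt (1 + exp (-2*a)) / (1 - exp (- (gain_rate a - ln (\<rho> a)))))
         \<longlongrightarrow> f 1) at_top"
proof -
  have "((\<lambda>a. (gain_rate a - ln (\<mu> + 1)) / a) \<longlongrightarrow> 1) at_top"
    unfolding gain_rate_def by real_asymp
  moreover have "eventually (\<lambda>a. (gain_rate a - ln (\<mu> + 1)) / a = (gain_rate a - ln (\<rho> a)) / a) at_top"
    using \<rho> by (rule eventually_mono) simp
  ultimately show "((\<lambda>a. (gain_rate a - ln (\<rho> a)) / a) \<longlongrightarrow> 1) at_top"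
    by (rule tendsto_cong[THEN iffD1, rotated])
  have "((\<lambda>a. f 1 * (sqrt (1 + exp (-2*a)) / (1 - exp (- (gain_rate a - ln (\<mu> + 1))))))
      \<longlongrightarrow> f 1 * 1) at_top"
    unfolding gain_rate_def by (intro tendsto_mult_left) real_asymp
  moreover have "eventually (\<lambda>a. f 1 * (sqrt (1 + exp (-2*a)) / (1 - exp (- (gain_rate a - ln (\<mu> + 1)))))
      = f (\<rho> a - \<mu>) * sqrt (1 + exp (-2*a)) / (1 - exp (- (gain_rate a - ln (\<rho> a))))) at_top"
    using \<rho> by (rule eventually_mono) simp
  ultimately show "((\<lambda>a. f (\<rho> a - \<mu>) * sqrt (1 + exp (-2*a)) / (1 - exp (- (gain_rate a - ln (\<rho> a)))))
      \<longlongrightarrow> f 1) at_top"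
    by (auto dest: tendsto_cong[THEN iffD1, rotated])
qed

theorem theorem2p1:
  fixes E :: "'v \<Rightarrow> 'v \<Rightarrow> bool" and x0 :: 'v and \<alpha>0 :: real
  assumes "simple_graph E"
    and "infinite (UNIV :: 'v set)"
    and "vertex_transitive E"
    and "bounded_degree E"
    and "cyclic_connective_constant E x0 > 0"
    and "\<alpha>0 + ln (1 + exp (- 2 * \<alpha>0)) / 2 = ln (cyclic_connective_constant E x0)"
  shows "\<exists>C0 c0 :: real \<Rightarrow> real.
           (\<forall>\<alpha>>\<alpha>0. C0 \<alpha> > 0 \<and> c0 \<alpha> > 0 \<and>
              (\<forall>U z (l::nat). finite U \<longrightarrow> z \<in> U \<longrightarrow>
                 perm_prob E \<alpha> U (\<lambda>\<pi>. cycle_len \<pi> z > l) \<le> C0 \<alpha> * exp (- c0 \<alpha> * real l)))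
         \<and> ((\<lambda>\<alpha>. c0 \<alpha> / \<alpha>) \<longlongrightarrow> 1) at_top
         \<and> (\<exists>M. eventually (\<lambda>\<alpha>. C0 \<alpha> \<le> M) at_top)"
proof -
  define \<mu> where "\<mu> = cyclic_connective_constant E x0"
  define K where "K e = (SOME K. 0 < K \<and> (\<forall>n. real (card (SAP E x0 n)) \<le> K * (\<mu> + e) ^ n))" for e
  have K: "0 < K e \<and> (\<forall>n. real (card (SAP E x0 n)) \<le> K e * (\<mu> + e) ^ n)" if "0 < e" for e
    unfolding K_def \<mu>_def by (rule someI_ex) (rule card_SAP_le_exponential[OF assms(5) that])
  \<comment> \<open>Any base strictly between \<open>\<mu>\<close> and \<open>exp (gain_rate \<alpha>)\<close> works; capping it at \<open>\<mu> + 1\<close>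
    makes it constant for large \<open>\<alpha>\<close>.\<close>
  define \<rho> where "\<rho> a = min (\<mu> + 1) ((\<mu> + exp (gain_rate a)) / 2)" for a
  define c0 where "c0 a = gain_rate a - ln (\<rho> a)" for a
  define C0 where "C0 a = K (\<rho> a - \<mu>) * sqrt (1 + exp (-2*a)) / (1 - exp (- c0 a))" for a
  have "0 < C0 a \<and> 0 < c0 a \<and> (\<forall>U z (l::nat). finite U \<longrightarrow> z \<in> U \<longrightarrow>
          perm_prob E a U (\<lambda>\<pi>. cycle_len \<pi> z > l) \<le> C0 a * exp (- c0 a * real l))" if "\<alpha>0 < a" for a
  proof -
    have "\<mu> < exp (gain_rate a)"
      using assms(5,6) that by (intro less_exp_gain_rate) (simp_all add: \<mu>_def gain_rate_def)
    then have \<rho>a: "\<mu> < \<rho> a" "\<rho> a < exp (gain_rate a)"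
      unfolding \<rho>_def by (rule less_min_midpoint, rule min_midpoint_less)
    then have "0 < K (\<rho> a - \<mu>)" "\<forall>n. real (card (SAP E x0 n)) \<le> K (\<rho> a - \<mu>) * \<rho> a ^ n"
      using K[of "\<rho> a - \<mu>"] by auto
    with \<rho>a show ?thesis
      unfolding C0_def c0_def using assms(5)
      by (intro cycle_len_tail_bound[OF assms(1,4,3)]) (simp_all add: \<mu>_def)
  qed
  moreover have \<rho>: "eventually (\<lambda>a. \<rho> a = \<mu> + 1) at_top"
    unfolding \<rho>_def by (rule eventually_min_exp_gain_rate) (use assms(5) in \<open>simp add: \<mu>_def\<close>)
  moreover have "eventually (\<lambda>a. C0 a \<le> K 1 + 1) at_top"
    using order_tendstoD(2)[OF prefactor_tendsto[OF \<rho>, of K], of "K 1 + 1"]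
    by (auto simp: C0_def c0_def elim: eventually_mono)
  moreover have "((\<lambda>a. c0 a / a) \<longlongrightarrow> 1) at_top"
    unfolding c0_def by (rule decay_rate_over_tendsto[OF \<rho>])
  ultimately show ?thesis
    by (intro exI[of _ C0] exI[of _ c0] exI[of _ "K 1 + 1"] conjI allI impI) simp_all
qed

end
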